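(* Under the hybrid market scheme described in the context (with $\tau,\lambda,A$ such that aggregate emissions equal $A$ under both schemes and $A$ satisfying the feasibility condition in the context), $$\mathrm{GDP}^{\mathrm{mar}}=\mathrm{GDP}^{\mathrm{tax}}+\tfrac12\Big(\tfrac{(\sum_b\mathrm{E}^{\mathrm{mar}}_b)^2}{\varrho}-\sum_b\tfrac{(\mathrm{E}^{\mathrm{mar}}_b)^2}{\varrho_b}\Big),\quad\text{with}\quad\tfrac{(\sum_b\mathrm{E}^{\mathrm{mar}}_b)^2}{\varrho}-\sum_b\tfrac{(\mathrm{E}^{\mathrm{mar}}_b)^2}{\varrho_b}\le0.$$ Moreover the combined wealth of companies and regulator is lower under the market scheme, namely $$\mathcal{W}^{\mathrm{mar}}_{\mathrm{C}}+\mathcal{W}^{\mathrm{mar}}_{\mathrm{R}}=\mathcal{W}^{\mathrm{tax}}_{\mathrm{C}}+\mathcal{W}^{\mathrm{tax}}_{\mathrm{R}}+\tfrac32\Big(\tfrac{(\sum_b\mathrm{E}^{\mathrm{mar}}_b)^2}{\varrho}-\sum_b\tfrac{(\mathrm{E}^{\mathrm{mar}}_b)^2}{\varrho_b}\Big)-\tfrac{(\sum_b\mathrm{E}^{\mathrm{mar}}_b)^2}{\varrho}.$$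
   Context: Companies indexed by $c$ buy certificates directly at the auction; companies indexed by $b$ buy through financial intermediaries. Each company $i$ has $\pi^0_i,\pi^1_i,\gamma_i>0$, raw wealth $\pi^0_iq-\tfrac{\pi^1_i}2q^2$, emissions $e^{-a}q$ at green cost $\tfrac{\gamma_i}2[(1-e^{-a})q]^2$; $\mathrm{E}^{\mathrm{bau}}_i=\pi^0_i/\pi^1_i$, $\varrho_i=1/\pi^1_i+1/\gamma_i$, $\varrho=\sum_i\varrho_i$ (over all companies); standing assumption $\tau\varrho_i<\mathrm{E}^{\mathrm{bau}}_i$, $\lambda\varrho_i<\mathrm{E}^{\mathrm{bau}}_i$. Feasibility: $[\max_b\tfrac{\mathrm{E}^{\mathrm{bau}}_b}{\varrho_b}-2\lambda](\sum_c\varrho_c+\tfrac12\sum_b\varrho_b)+\sum_c\mathrm{E}^{\mathrm{bau}}_c+\tfrac12\sum_b\mathrm{E}^{\mathrm{bau}}_b\le A<\sum_c\mathrm{E}^{\mathrm{bau}}_c+\sum_b[\tfrac{\mathrm{E}^{\mathrm{bau}}_b}2\vee(\mathrm{E}^{\mathrm{bau}}_b-\lambda\varrho_b)]$. Tax: company maximizes wealth minus $\tau e^{-a}q$, optimal wealth $\mathcal{W}^{\mathrm{tax}}_{\mathrm{C},i}$; regulator earns $\tau\times$ aggregate emissions. Market: company facing price $P$ maximizes wealth $-\delta P-\lambda(e^{-a}q-\delta)^+$, demand $\bm{\delta_i}(P)=\mathrm{E}^{\mathrm{bau}}_i-P\varrho_i$, emissions $\mathrm{E}^{\mathrm{mar}}_i$,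 wealth $\mathcal{W}^{\mathrm{mar}}_{\mathrm{C},i}$; $c$ faces spot price $S$, intermediary of $b$ sets $\bm{P_b}(S)=\arg\max_{P\in[S,\lambda]}\bm{\delta_b}(P)(P-S)$ earning $\mathcal{W}^{\mathrm{mar}}_{\mathrm{F},b}=\bm{\delta_b}(\bm{P_b})(\bm{P_b}-S)$; equilibrium $\bm S$ clears $A=\sum_i\bm{\delta_i}(\bm{P_i}(\bm S))$; regulator earns $\lambda\sum_i(\mathrm{E}^{\mathrm{mar}}_i-\bm{\delta_i})^++\bm SA$. Aggregates are sums; $\mathrm{GDP}^{\cdot}=\mathcal{W}^{\cdot}_{\mathrm{C}}+\mathcal{W}^{\cdot}_{\mathrm{F}}+\mathcal{W}^{\cdot}_{\mathrm{R}}$ with $\mathcal{W}^{\mathrm{tax}}_{\mathrm{F}}=0$. *)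

theory Defs
  imports Complex_Main
begin

text \<open>Company parameters are given as functions of the company index:
  p0 i = pi^0_i, p1 i = pi^1_i, g i = gamma_i.\<close>

definition Ebau :: "('i \<Rightarrow> real) \<Rightarrow> ('i \<Rightarrow> real) \<Rightarrow> 'i \<Rightarrow> real" where
  "Ebau p0 p1 i = p0 i / p1 i"

definition rho :: "('i \<Rightarrow> real) \<Rightarrow> ('i \<Rightarrow> real) \<Rightarrow> 'i \<Rightarrow> real" where
  "rho p1 g i = 1 / p1 i + 1 / g i"

definition raw_wealth :: "('i \<Rightarrow> real) \<Rightarrow> ('i \<Rightarrow> real) \<Rightarrow> 'i \<Rightarrow> real \<Rightarrow> real" where
  "raw_wealth p0 p1 i q = p0 i * q - p1 i / 2 * q ^ 2"

definition green_cost :: "('i \<Rightarrow> real) \<Rightarrow> 'i \<Rightarrow> real \<Rightarrow> real \<Rightarrow> real" where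
  "green_cost g i q a = g i / 2 * ((1 - exp (- a)) * q) ^ 2"

definition emis :: "real \<Rightarrow> real \<Rightarrow> real" where
  "emis q a = exp (- a) * q"

definition tax_obj :: "('i \<Rightarrow> real) \<Rightarrow> ('i \<Rightarrow> real) \<Rightarrow> ('i \<Rightarrow> real) \<Rightarrow> real \<Rightarrow> 'i
    \<Rightarrow> real \<Rightarrow> real \<Rightarrow> real" where
  "tax_obj p0 p1 g tau i q a = raw_wealth p0 p1 i q - green_cost g i q a - tau * emis q a"

definition tax_wealth :: "('i \<Rightarrow> real) \<Rightarrow> ('i \<Rightarrow> real) \<Rightarrow> ('i \<Rightarrow> real) \<Rightarrow> real \<Rightarrow> 'i \<Rightarrow> real" where
  "tax_wealth p0 p1 g tau i =
     (SUP qa \<in> {qa :: real \<times> real. 0 \<le> fst qa \<and> 0 \<le> snd qa}. tax_obj p0 p1 g tau i (fst qa) (snd qa))"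

definition tax_emission :: "('i \<Rightarrow> real) \<Rightarrow> ('i \<Rightarrow> real) \<Rightarrow> ('i \<Rightarrow> real) \<Rightarrow> real \<Rightarrow> 'i \<Rightarrow> real" where
  "tax_emission p0 p1 g tau i =
     (THE e. \<exists>q a. 0 \<le> q \<and> 0 \<le> a \<and> tax_obj p0 p1 g tau i q a = tax_wealth p0 p1 g tau i
                  \<and> e = emis q a)"

text \<open>Market scheme: company facing certificate price P buys d \<ge> 0 certificates and
  pays penalty lam per uncovered unit of emission.\<close>
definition mar_obj :: "('i \<Rightarrow> real) \<Rightarrow> ('i \<Rightarrow> real) \<Rightarrow> ('i \<Rightarrow> real) \<Rightarrow> real \<Rightarrow> real \<Rightarrow> 'i
    \<Rightarrow> real \<Rightarrow> real \<Rightarrow> real \<Rightarrow> real" where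
  "mar_obj p0 p1 g lam P i q a d =
     raw_wealth p0 p1 i q - green_cost g i q a - d * P - lam * max 0 (emis q a - d)"

definition mar_wealth :: "('i \<Rightarrow> real) \<Rightarrow> ('i \<Rightarrow> real) \<Rightarrow> ('i \<Rightarrow> real) \<Rightarrow> real \<Rightarrow> real \<Rightarrow> 'i \<Rightarrow> real" where
  "mar_wealth p0 p1 g lam P i =
     (SUP x \<in> {x :: real \<times> real \<times> real. 0 \<le> fst x \<and> 0 \<le> fst (snd x) \<and> 0 \<le> snd (snd x)}.
        mar_obj p0 p1 g lam P i (fst x) (fst (snd x)) (snd (snd x)))"

definition mar_emission :: "('i \<Rightarrow> real) \<Rightarrow> ('i \<Rightarrow> real) \<Rightarrow> ('i \<Rightarrow> real) \<Rightarrow> real \<Rightarrow> real \<Rightarrow> 'i \<Rightarrow> real" where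
  "mar_emission p0 p1 g lam P i =
     (THE e. \<exists>q a d. 0 \<le> q \<and> 0 \<le> a \<and> 0 \<le> d
                  \<and> mar_obj p0 p1 g lam P i q a d = mar_wealth p0 p1 g lam P i \<and> e = emis q a)"

definition demand :: "('i \<Rightarrow> real) \<Rightarrow> ('i \<Rightarrow> real) \<Rightarrow> ('i \<Rightarrow> real) \<Rightarrow> real \<Rightarrow> 'i \<Rightarrow> real" where
  "demand p0 p1 g P i = Ebau p0 p1 i - P * rho p1 g i"

definition interm_price :: "('i \<Rightarrow> real) \<Rightarrow> ('i \<Rightarrow> real) \<Rightarrow> ('i \<Rightarrow> real) \<Rightarrow> real \<Rightarrow> real \<Rightarrow> 'i \<Rightarrow> real" where
  "interm_price p0 p1 g lam S b = (ARG_MAX (\<lambda>P. demand p0 p1 g P b * (P - S)) P. S \<le> P \<and> P \<le> lam)"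

text \<open>Price faced by company i: spot price for direct buyers, intermediary price for i \<in> B.\<close>
definition mprice :: "'i set \<Rightarrow> ('i \<Rightarrow> real) \<Rightarrow> ('i \<Rightarrow> real) \<Rightarrow> ('i \<Rightarrow> real) \<Rightarrow> real \<Rightarrow> real \<Rightarrow> 'i \<Rightarrow> real" where
  "mprice B p0 p1 g lam S i = (if i \<in> B then interm_price p0 p1 g lam S i else S)"

text \<open>Equilibrium spot price (the intermediary problem needs S \<le> lam).\<close>
definition is_equilibrium :: "'i set \<Rightarrow> 'i set \<Rightarrow> ('i \<Rightarrow> real) \<Rightarrow> ('i \<Rightarrow> real) \<Rightarrow> ('i \<Rightarrow> real)
    \<Rightarrow> real \<Rightarrow> real \<Rightarrow> real \<Rightarrow> bool" where
  "is_equilibrium C B p0 p1 g lam A S \<longleftrightarrow>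
     S \<le> lam \<and> A = (\<Sum>i\<in>C \<union> B. demand p0 p1 g (mprice B p0 p1 g lam S i) i)"

definition WC_tax where
  "WC_tax C B p0 p1 g tau = (\<Sum>i\<in>C \<union> B. tax_wealth p0 p1 g tau i)"
definition WR_tax where
  "WR_tax C B p0 p1 g tau = tau * (\<Sum>i\<in>C \<union> B. tax_emission p0 p1 g tau i)"
definition GDP_tax where
  "GDP_tax C B p0 p1 g tau = WC_tax C B p0 p1 g tau + 0 + WR_tax C B p0 p1 g tau"

definition Emar where
  "Emar B p0 p1 g lam S i = mar_emission p0 p1 g lam (mprice B p0 p1 g lam S i) i"

definition WC_mar where
  "WC_mar C B p0 p1 g lam S = (\<Sum>i\<in>C \<union> B. mar_wealth p0 p1 g lam (mprice B p0 p1 g lam S i) i)"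
definition WF_mar where
  "WF_mar B p0 p1 g lam S =
     (\<Sum>b\<in>B. demand p0 p1 g (interm_price p0 p1 g lam S b) b * (interm_price p0 p1 g lam S b - S))"
definition WR_mar where
  "WR_mar C B p0 p1 g lam A S =
     lam * (\<Sum>i\<in>C \<union> B. max 0 (Emar B p0 p1 g lam S i - demand p0 p1 g (mprice B p0 p1 g lam S i) i))
     + S * A"
definition GDP_mar where
  "GDP_mar C B p0 p1 g lam A S =
     WC_mar C B p0 p1 g lam S + WF_mar B p0 p1 g lam S + WR_mar C B p0 p1 g lam A S"

end

theory Submission
  imports Defs "HOL-Analysis.Convex"
begin

(* Completing the square shows that a company taxed at rate P, or buying certificates at price
   P <= lam (it then covers all of its emission), ends with the same wealth
   W_i(P) = p0^2 / (2 p1) - P Ebau + P^2 rho / 2 and emits Ebau - P rho.  Each intermediary's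
   margin is a downward parabola in its price, and the feasibility bounds (through the monotonicity
   of aggregate demand in the spot price S) put every intermediary at its vertex
   (Ebau_b / rho_b + S) / 2.  Its markup is then E_b / rho_b, where E_b is the market emission of b;
   the intermediary earns E_b^2 / rho_b and company b loses 3/2 E_b^2 / rho_b against W_b(S).
   Equal aggregate emissions force tau = S + (sum_b E_b) / rho.  As sum_i W_i(P) + P A is a convex
   parabola in P with minimum at tau and curvature rho, replacing tau by S adds
   (sum_b E_b)^2 / (2 rho), which gives both identities; X <= 0 is the Cauchy-Schwarz inequality. *)

section \<open>Optimal behaviour of a single company\<close>

definition optimal_wealth :: "('i \<Rightarrow> real) \<Rightarrow> ('i \<Rightarrow> real) \<Rightarrow> ('i \<Rightarrow> real) \<Rightarrow> real \<Rightarrow> 'i \<Rightarrow> real"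
  where "optimal_wealth p0 p1 g P i = p0 i ^ 2 / (2 * p1 i) - P * Ebau p0 p1 i + P ^ 2 * rho p1 g i / 2"

lemma tax_obj_completed_square:
  assumes "0 < p1 i" "0 < g i"
  shows "tax_obj p0 p1 g tau i q a = optimal_wealth p0 p1 g tau i
           - p1 i / 2 * (q - (p0 i - tau) / p1 i) ^ 2 - g i / 2 * ((1 - exp (- a)) * q - tau / g i) ^ 2"
  using assms
  unfolding tax_obj_def raw_wealth_def green_cost_def emis_def optimal_wealth_def Ebau_def rho_def
  by (simp add: field_simps power2_eq_square)

lemma tax_obj_le_optimal_wealth:
  assumes "0 < p1 i" "0 < g i"
  shows "tax_obj p0 p1 g tau i q a \<le> optimal_wealth p0 p1 g tau i"
proof -
  have "0 \<le> p1 i / 2 * (q - (p0 i - tau) / p1 i) ^ 2" "0 \<le> g i / 2 * ((1 - exp (- a)) * q - tau / g i) ^ 2"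
    using assms by simp_all
  then show ?thesis using tax_obj_completed_square[of p1 i g p0 tau q a] assms by linarith
qed

lemma emis_eq_if_tax_obj_optimal:
  assumes "0 < p1 i" "0 < g i" and opt: "tax_obj p0 p1 g tau i q a = optimal_wealth p0 p1 g tau i"
  shows "emis q a = Ebau p0 p1 i - tau * rho p1 g i"
proof -
  have "0 \<le> p1 i / 2 * (q - (p0 i - tau) / p1 i) ^ 2" "0 \<le> g i / 2 * ((1 - exp (- a)) * q - tau / g i) ^ 2"
    using assms by simp_all
  then have "p1 i / 2 * (q - (p0 i - tau) / p1 i) ^ 2 = 0" "g i / 2 * ((1 - exp (- a)) * q - tau / g i) ^ 2 = 0"
    using opt tax_obj_completed_square[of p1 i g p0 tau q a] assms(1,2) by linarith+
  then have q: "q = (p0 i - tau) / p1 i" and abated: "(1 - exp (- a)) * q = tau / g i"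
    using assms(1,2) by simp_all
  have "emis q a = q - tau / g i"
    using abated unfolding emis_def by (simp add: left_diff_distrib)
  then show ?thesis
    using assms(1,2) unfolding q Ebau_def rho_def by (simp add: field_simps)
qed

text \<open>The maximiser produces \<open>q = (p0 - tau) / p1\<close> and abates down to the emission
  \<open>e = Ebau - tau * rho\<close>, i.e. \<open>a = ln (q / e)\<close>; this needs \<open>e > 0\<close>.\<close>
lemma tax_obj_attains_optimal_wealth:
  assumes "0 < p1 i" "0 < g i" "0 \<le> tau" "tau * rho p1 g i < Ebau p0 p1 i"
  obtains q a where "0 \<le> q" "0 \<le> a" "tax_obj p0 p1 g tau i q a = optimal_wealth p0 p1 g tau i"
proof
  define e where "e = Ebau p0 p1 i - tau * rho p1 g i"
  define q where "q = (p0 i - tau) / p1 i"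
  have "0 < e" using assms(4) unfolding e_def by simp
  moreover have "q = e + tau / g i"
    using assms(1,2) unfolding e_def q_def Ebau_def rho_def by (simp add: field_simps)
  moreover have "0 \<le> tau / g i" using assms by simp
  ultimately have e_le_q: "e \<le> q" and q_pos: "0 < q" by linarith+
  show "0 \<le> q" using q_pos by simp
  show "0 \<le> ln (q / e)" using \<open>0 < e\<close> e_le_q by simp
  have "exp (- ln (q / e)) * q = e"
    using \<open>0 < e\<close> q_pos by (simp add: exp_minus)
  then have "(1 - exp (- ln (q / e))) * q = tau / g i"
    using \<open>q = e + tau / g i\<close> by (simp add: algebra_simps)
  then show "tax_obj p0 p1 g tau i q (ln (q / e)) = optimal_wealth p0 p1 g tau i"
    using assms by (simp add: tax_obj_completed_square q_def)
qed

lemma tax_wealth_emission_eqI: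
  assumes "0 \<le> q0" "0 \<le> a0" "tax_obj p0 p1 g tau i q0 a0 = W"
    and le: "\<And>q a. 0 \<le> q \<Longrightarrow> 0 \<le> a \<Longrightarrow> tax_obj p0 p1 g tau i q a \<le> W"
    and uniq: "\<And>q a. 0 \<le> q \<Longrightarrow> 0 \<le> a \<Longrightarrow> tax_obj p0 p1 g tau i q a = W \<Longrightarrow> emis q a = e"
  shows "tax_wealth p0 p1 g tau i = W" and "tax_emission p0 p1 g tau i = e"
proof -
  show wealth: "tax_wealth p0 p1 g tau i = W"
    unfolding tax_wealth_def
  proof (rule cSup_eq_maximum)
    show "W \<in> (\<lambda>qa. tax_obj p0 p1 g tau i (fst qa) (snd qa)) ` {qa. 0 \<le> fst qa \<and> 0 \<le> snd qa}"
      using assms(1-3) by (auto intro!: image_eqI[of _ _ "(q0, a0)"])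
  qed (use le in auto)
  show "tax_emission p0 p1 g tau i = e"
    unfolding tax_emission_def wealth
  proof (rule the_equality)
    show "\<exists>q a. 0 \<le> q \<and> 0 \<le> a \<and> tax_obj p0 p1 g tau i q a = W \<and> e = emis q a"
      using assms(1-3) uniq by metis
  qed (use uniq in blast)
qed

lemma tax_wealth_emission_eq:
  assumes "0 < p1 i" "0 < g i" "0 \<le> tau" "tau * rho p1 g i < Ebau p0 p1 i"
  shows "tax_wealth p0 p1 g tau i = optimal_wealth p0 p1 g tau i"
    and "tax_emission p0 p1 g tau i = Ebau p0 p1 i - tau * rho p1 g i"
proof -
  obtain q a where q: "0 \<le> q" and a: "0 \<le> a"
    and opt: "tax_obj p0 p1 g tau i q a = optimal_wealth p0 p1 g tau i"
    using assms by (rule tax_obj_attains_optimal_wealth)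
  have le: "tax_obj p0 p1 g tau i q a \<le> optimal_wealth p0 p1 g tau i"
    if "0 \<le> q" "0 \<le> a" for q a
    using assms(1,2) by (rule tax_obj_le_optimal_wealth)
  have uniq: "emis q a = Ebau p0 p1 i - tau * rho p1 g i"
    if "0 \<le> q" "0 \<le> a" "tax_obj p0 p1 g tau i q a = optimal_wealth p0 p1 g tau i" for q a
    using assms(1,2) that(3) by (rule emis_eq_if_tax_obj_optimal)
  show "tax_wealth p0 p1 g tau i = optimal_wealth p0 p1 g tau i"
    using q a opt le uniq by (rule tax_wealth_emission_eqI(1))
  show "tax_emission p0 p1 g tau i = Ebau p0 p1 i - tau * rho p1 g i"
    using q a opt le uniq by (rule tax_wealth_emission_eqI(2))
qed

lemma tax_emission_negative_rate:
  assumes "0 < p0 i" "0 < p1 i" "0 < g i" "tau < 0"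
  shows "tax_emission p0 p1 g tau i = (p0 i - tau) / p1 i"
proof -
  define W where "W = (p0 i - tau) ^ 2 / (2 * p1 i)"
  define q0 where "q0 = (p0 i - tau) / p1 i"
  have "raw_wealth p0 p1 i q - tau * q = W - p1 i / 2 * (q - q0) ^ 2" for q
    using assms unfolding raw_wealth_def W_def q0_def by (simp add: field_simps power2_eq_square)
  then have obj: "tax_obj p0 p1 g tau i q a
      = W - p1 i / 2 * (q - q0) ^ 2 - g i / 2 * ((1 - exp (- a)) * q) ^ 2 + tau * ((1 - exp (- a)) * q)"
    for q a
    unfolding tax_obj_def green_cost_def emis_def by (simp add: algebra_simps)
  have bounds: "0 \<le> p1 i / 2 * (q - q0) ^ 2" "0 \<le> g i / 2 * ((1 - exp (- a)) * q) ^ 2"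
    "tau * ((1 - exp (- a)) * q) \<le> 0" if "0 \<le> q" "0 \<le> a" for q a
  proof -
    show "0 \<le> p1 i / 2 * (q - q0) ^ 2" "0 \<le> g i / 2 * ((1 - exp (- a)) * q) ^ 2"
      using assms(2,3) by simp_all
    have "exp (- a) \<le> 1" using that(2) by simp
    then have "0 \<le> (1 - exp (- a)) * q" using that(1) by simp
    then show "tau * ((1 - exp (- a)) * q) \<le> 0" using assms(4) by (intro mult_nonpos_nonneg) auto
  qed
  show ?thesis
    unfolding q0_def[symmetric]
  proof (rule tax_wealth_emission_eqI(2))
    show "0 \<le> q0" using assms unfolding q0_def by simp
    show "tax_obj p0 p1 g tau i q0 0 = W" by (simp add: obj)
    show "tax_obj p0 p1 g tau i q a \<le> W" if "0 \<le> q" "0 \<le> a" for q a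
      using bounds[OF that] obj[of q a] by linarith
    show "emis q a = q0" if "0 \<le> q" "0 \<le> a" "tax_obj p0 p1 g tau i q a = W" for q a
    proof -
      have "p1 i / 2 * (q - q0) ^ 2 = 0" "tau * ((1 - exp (- a)) * q) = 0"
        using bounds[OF that(1,2)] obj[of q a] that(3) by linarith+
      then have "q = q0" "(1 - exp (- a)) * q = 0"
        using assms(2,4) by simp_all
      then show ?thesis using assms(4) by (simp add: emis_def algebra_simps)
    qed
  qed (rule order_refl)
qed

lemma mar_obj_le_tax_obj:
  assumes "0 \<le> P" "P \<le> lam"
  shows "mar_obj p0 p1 g lam P i q a d \<le> tax_obj p0 p1 g P i q a"
proof -
  have "P * emis q a - d * P - lam * max 0 (emis q a - d) \<le> 0"
  proof (cases "d \<le> emis q a")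
    case True
    then have "(P - lam) * (emis q a - d) \<le> 0"
      using assms by (intro mult_nonpos_nonneg) auto
    then show ?thesis using True by (simp add: algebra_simps)
  next
    case False
    then have "P * (emis q a - d) \<le> 0"
      using assms by (intro mult_nonneg_nonpos) auto
    then show ?thesis using False by (simp add: algebra_simps)
  qed
  then show ?thesis unfolding mar_obj_def tax_obj_def by simp
qed

lemma mar_obj_covered: "mar_obj p0 p1 g lam P i q a (emis q a) = tax_obj p0 p1 g P i q a"
  unfolding mar_obj_def tax_obj_def by simp

text \<open>Since \<open>P \<le> lam\<close>, a company facing the certificate price \<open>P\<close> covers all its emission
  and behaves exactly as under a tax at rate \<open>P\<close>.\<close>
lemma mar_wealth_emission_eq:
  assumes "0 < p1 i" "0 < g i" "0 \<le> P" "P \<le> lam" "P * rho p1 g i < Ebau p0 p1 i"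
  shows "mar_wealth p0 p1 g lam P i = optimal_wealth p0 p1 g P i"
    and "mar_emission p0 p1 g lam P i = Ebau p0 p1 i - P * rho p1 g i"
proof -
  obtain q a where q: "0 \<le> q" and a: "0 \<le> a"
    and opt: "tax_obj p0 p1 g P i q a = optimal_wealth p0 p1 g P i"
    using assms(1-3,5) by (rule tax_obj_attains_optimal_wealth)
  have d: "0 \<le> emis q a" using q by (simp add: emis_def)
  have cover: "mar_obj p0 p1 g lam P i q a (emis q a) = optimal_wealth p0 p1 g P i"
    using opt by (simp add: mar_obj_covered)
  have le: "mar_obj p0 p1 g lam P i q' a' d' \<le> optimal_wealth p0 p1 g P i" for q' a' d'
    using mar_obj_le_tax_obj[of P lam p0 p1 g i q' a' d'] tax_obj_le_optimal_wealth[of p1 i g p0 P q' a']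
      assms by linarith
  show wealth: "mar_wealth p0 p1 g lam P i = optimal_wealth p0 p1 g P i"
    unfolding mar_wealth_def
  proof (rule cSup_eq_maximum)
    show "optimal_wealth p0 p1 g P i \<in> (\<lambda>x. mar_obj p0 p1 g lam P i (fst x) (fst (snd x)) (snd (snd x)))
            ` {x. 0 \<le> fst x \<and> 0 \<le> fst (snd x) \<and> 0 \<le> snd (snd x)}"
      using q a d cover by (auto intro!: image_eqI[of _ _ "(q, a, emis q a)"])
  qed (use le in auto)
  have uniq: "emis q' a' = Ebau p0 p1 i - P * rho p1 g i"
    if "mar_obj p0 p1 g lam P i q' a' d' = optimal_wealth p0 p1 g P i" for q' a' d'
  proof -
    have "tax_obj p0 p1 g P i q' a' = optimal_wealth p0 p1 g P i"
      using that mar_obj_le_tax_obj[of P lam p0 p1 g i q' a' d'] tax_obj_le_optimal_wealth[of p1 i g p0 P q' a']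
        assms by linarith
    with assms(1,2) show ?thesis by (rule emis_eq_if_tax_obj_optimal)
  qed
  show "mar_emission p0 p1 g lam P i = Ebau p0 p1 i - P * rho p1 g i"
    unfolding mar_emission_def wealth
  proof (rule the_equality)
    show "\<exists>q a d. 0 \<le> q \<and> 0 \<le> a \<and> 0 \<le> d \<and> mar_obj p0 p1 g lam P i q a d = optimal_wealth p0 p1 g P i
            \<and> Ebau p0 p1 i - P * rho p1 g i = emis q a"
      using q a d cover uniq by metis
  qed (use uniq in blast)
qed

section \<open>Pricing by the intermediaries\<close>

lemma arg_max_downward_parabola:
  fixes c r v lo hi :: real
  assumes "0 < r" "lo \<le> hi" "lo \<le> v"
  shows "(ARG_MAX (\<lambda>x. c - r * (x - v) ^ 2) x. lo \<le> x \<and> x \<le> hi) = min hi v"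
proof -
  define m where "m = min hi v"
  have closer: "(m - v) ^ 2 < (y - v) ^ 2" if "lo \<le> y" "y \<le> hi" "y \<noteq> m" for y
  proof (cases "v \<le> hi")
    case True
    then show ?thesis using that unfolding m_def by simp
  next
    case False
    then have "0 < v - hi" "v - hi < v - y" using that unfolding m_def by auto
    then have "(v - hi) ^ 2 < (v - y) ^ 2" by (simp add: power_strict_mono)
    then show ?thesis using False unfolding m_def by (simp add: power2_commute)
  qed
  show ?thesis
    unfolding m_def[symmetric]
  proof (rule arg_maxI)
    show "lo \<le> m \<and> m \<le> hi" using assms unfolding m_def by simp
    show "\<not> c - r * (m - v) ^ 2 < c - r * (y - v) ^ 2" if "lo \<le> y \<and> y \<le> hi" for y
      using closer[of y] that assms(1) by (cases "y = m") auto
    show "x = m" if "lo \<le> x \<and> x \<le> hi" "\<forall>y. lo \<le> y \<and> y \<le> hi \<longrightarrow> \<not> c - r * (x - v) ^ 2 < c - r * (y - v) ^ 2"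
      for x
      using closer[of x] that assms unfolding m_def by force
  qed
qed

text \<open>The intermediary's margin \<open>(P - S) * (Ebau - P * rho)\<close> is a downward parabola in \<open>P\<close>
  with vertex \<open>(Ebau / rho + S) / 2\<close>.\<close>
lemma interm_price_eq:
  assumes "0 < rho p1 g b" "S \<le> lam" "lam * rho p1 g b < Ebau p0 p1 b"
  shows "interm_price p0 p1 g lam S b = min lam ((Ebau p0 p1 b / rho p1 g b + S) / 2)"
proof -
  define v where "v = (Ebau p0 p1 b / rho p1 g b + S) / 2"
  have margin: "(\<lambda>P. demand p0 p1 g P b * (P - S)) = (\<lambda>P. rho p1 g b * (v - S) ^ 2 - rho p1 g b * (P - v) ^ 2)"
    using assms(1) unfolding demand_def v_def by (auto simp: field_simps power2_eq_square)
  have "lam < Ebau p0 p1 b / rho p1 g b" using assms(1,3) by (simp add: field_simps)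
  then have "S \<le> v" using assms(2) unfolding v_def by simp
  with assms(1,2) show ?thesis
    unfolding interm_price_def margin v_def[symmetric] by (rule arg_max_downward_parabola)
qed

section \<open>Aggregates and equilibrium\<close>

lemma optimal_wealth_shift:
  "optimal_wealth p0 p1 g (P + x) i
     = optimal_wealth p0 p1 g P i - x * (Ebau p0 p1 i - P * rho p1 g i) + x ^ 2 * rho p1 g i / 2"
  unfolding optimal_wealth_def by (simp add: algebra_simps power2_eq_square)

lemma sum_optimal_wealth:
  "(\<Sum>i\<in>I. optimal_wealth p0 p1 g P i)
     = (\<Sum>i\<in>I. p0 i ^ 2 / (2 * p1 i)) - P * (\<Sum>i\<in>I. Ebau p0 p1 i) + P ^ 2 * (\<Sum>i\<in>I. rho p1 g i) / 2"
  unfolding optimal_wealth_def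
  by (simp add: sum_subtractf sum.distrib sum_distrib_left sum_divide_distrib)

lemma tax_rate_nonneg:
  assumes "finite I" "I \<noteq> {}" "\<forall>i\<in>I. 0 < p0 i \<and> 0 < p1 i \<and> 0 < g i"
    and "(\<Sum>i\<in>I. tax_emission p0 p1 g tau i) \<le> (\<Sum>i\<in>I. Ebau p0 p1 i)"
  shows "0 \<le> tau"
proof (rule ccontr)
  assume "\<not> 0 \<le> tau"
  then have "Ebau p0 p1 i < tax_emission p0 p1 g tau i" if "i \<in> I" for i
    using assms(3) that tax_emission_negative_rate[of p0 i p1 g tau]
    by (auto simp: Ebau_def divide_strict_right_mono)
  with assms(1,2) have "(\<Sum>i\<in>I. Ebau p0 p1 i) < (\<Sum>i\<in>I. tax_emission p0 p1 g tau i)"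
    by (rule sum_strict_mono)
  with assms(4) show False by linarith
qed

lemma weighted_Cauchy_Schwarz:
  fixes x w :: "'a \<Rightarrow> real"
  assumes "\<forall>i\<in>I. 0 < w i"
  shows "(\<Sum>i\<in>I. x i) ^ 2 \<le> (\<Sum>i\<in>I. w i) * (\<Sum>i\<in>I. x i ^ 2 / w i)"
proof -
  have "(\<Sum>i\<in>I. x i) = (\<Sum>i\<in>I. x i / sqrt (w i) * sqrt (w i))"
    and "(\<Sum>i\<in>I. (x i / sqrt (w i)) ^ 2) = (\<Sum>i\<in>I. x i ^ 2 / w i)"
    and "(\<Sum>i\<in>I. sqrt (w i) ^ 2) = (\<Sum>i\<in>I. w i)"
    using assms by (auto simp: power_divide intro!: sum.cong)
  then show ?thesis
    using Cauchy_Schwarz_ineq_sum[of "\<lambda>i. x i / sqrt (w i)" "\<lambda>i. sqrt (w i)" I]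
    by (simp add: mult.commute)
qed

lemma weighted_Cauchy_Schwarz_subset:
  fixes x w :: "'a \<Rightarrow> real"
  assumes "finite J" "I \<subseteq> J" "\<forall>j\<in>J. 0 < w j"
  shows "(\<Sum>i\<in>I. x i) ^ 2 / (\<Sum>j\<in>J. w j) \<le> (\<Sum>i\<in>I. x i ^ 2 / w i)"
proof -
  have w_I: "\<forall>i\<in>I. 0 < w i" using assms(2,3) by blast
  have "(\<Sum>i\<in>I. x i) ^ 2 \<le> (\<Sum>i\<in>I. w i) * (\<Sum>i\<in>I. x i ^ 2 / w i)"
    using w_I by (rule weighted_Cauchy_Schwarz)
  also have "\<dots> \<le> (\<Sum>j\<in>J. w j) * (\<Sum>i\<in>I. x i ^ 2 / w i)"
    using assms w_I by (intro mult_right_mono sum_mono2 sum_nonneg) (auto simp: less_imp_le)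
  finally have CS: "(\<Sum>i\<in>I. x i) ^ 2 \<le> (\<Sum>j\<in>J. w j) * (\<Sum>i\<in>I. x i ^ 2 / w i)" .
  have "0 \<le> (\<Sum>j\<in>J. w j)" using assms(3) by (simp add: sum_nonneg less_imp_le)
  show ?thesis
  proof (cases "(\<Sum>j\<in>J. w j) = 0")
    case True
    then show ?thesis using w_I by (simp add: sum_nonneg less_imp_le)
  next
    case False
    with \<open>0 \<le> (\<Sum>j\<in>J. w j)\<close> have "0 < (\<Sum>j\<in>J. w j)" by simp
    with CS show ?thesis by (simp add: pos_divide_le_eq mult.commute)
  qed
qed

locale hybrid_market =
  fixes C B :: "'i set" and p0 p1 g :: "'i \<Rightarrow> real" and lam :: real
  assumes finite_C: "finite C" and finite_B: "finite B" and disjoint: "C \<inter> B = {}"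
    and C_nonempty: "C \<noteq> {}"
    and params_pos: "\<forall>i\<in>C \<union> B. 0 < p0 i \<and> 0 < p1 i \<and> 0 < g i"
    and penalty_below_bau: "\<forall>i\<in>C \<union> B. lam * rho p1 g i < Ebau p0 p1 i"
begin

lemma rho_pos: "i \<in> C \<union> B \<Longrightarrow> 0 < rho p1 g i"
  using params_pos unfolding rho_def by (auto intro: add_pos_pos)

lemma Ebau_pos: "i \<in> C \<union> B \<Longrightarrow> 0 < Ebau p0 p1 i"
  using params_pos unfolding Ebau_def by auto

lemma sum_union: "(\<Sum>i\<in>C \<union> B. f i) = (\<Sum>i\<in>C. f i) + (\<Sum>i\<in>B. f i)"
  by (rule sum.union_disjoint[OF finite_C finite_B disjoint])

lemma mprice_direct: "c \<in> C \<Longrightarrow> mprice B p0 p1 g lam S c = S"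
  using disjoint unfolding mprice_def by auto

lemma mprice_intermediated:
  assumes "b \<in> B" "S \<le> lam"
  shows "mprice B p0 p1 g lam S b = min lam ((Ebau p0 p1 b / rho p1 g b + S) / 2)"
  using assms rho_pos[of b] penalty_below_bau interm_price_eq[of p1 g b S lam p0]
  unfolding mprice_def by auto

definition agg_demand :: "real \<Rightarrow> real" where
  "agg_demand S = (\<Sum>c\<in>C. demand p0 p1 g S c)
     + (\<Sum>b\<in>B. demand p0 p1 g (min lam ((Ebau p0 p1 b / rho p1 g b + S) / 2)) b)"

lemma agg_demand_if_equilibrium:
  assumes "is_equilibrium C B p0 p1 g lam A S"
  shows "A = agg_demand S"
proof -
  have "S \<le> lam" and A: "A = (\<Sum>i\<in>C \<union> B. demand p0 p1 g (mprice B p0 p1 g lam S i) i)"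
    using assms unfolding is_equilibrium_def by auto
  then show ?thesis
    unfolding agg_demand_def A sum_union
    by (simp add: mprice_direct mprice_intermediated cong: sum.cong)
qed

lemma agg_demand_strict_antimono:
  assumes "S < S'"
  shows "agg_demand S' < agg_demand S"
proof -
  have "(\<Sum>c\<in>C. demand p0 p1 g S' c) < (\<Sum>c\<in>C. demand p0 p1 g S c)"
    using finite_C C_nonempty
  proof (rule sum_strict_mono)
    show "demand p0 p1 g S' c < demand p0 p1 g S c" if "c \<in> C" for c
      using assms rho_pos[of c] that unfolding demand_def by simp
  qed
  moreover have "(\<Sum>b\<in>B. demand p0 p1 g (min lam ((Ebau p0 p1 b / rho p1 g b + S') / 2)) b)
      \<le> (\<Sum>b\<in>B. demand p0 p1 g (min lam ((Ebau p0 p1 b / rho p1 g b + S) / 2)) b)"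
  proof (rule sum_mono)
    fix b assume "b \<in> B"
    have "min lam ((Ebau p0 p1 b / rho p1 g b + S) / 2) \<le> min lam ((Ebau p0 p1 b / rho p1 g b + S') / 2)"
      using assms by (intro min.mono) simp_all
    then show "demand p0 p1 g (min lam ((Ebau p0 p1 b / rho p1 g b + S') / 2)) b
        \<le> demand p0 p1 g (min lam ((Ebau p0 p1 b / rho p1 g b + S) / 2)) b"
      using rho_pos[of b] \<open>b \<in> B\<close> unfolding demand_def by (simp add: mult_right_mono)
  qed
  ultimately show ?thesis unfolding agg_demand_def by linarith
qed

lemma agg_demand_zero:
  "agg_demand 0 = (\<Sum>c\<in>C. Ebau p0 p1 c) + (\<Sum>b\<in>B. max (Ebau p0 p1 b / 2) (Ebau p0 p1 b - lam * rho p1 g b))"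
proof -
  have "demand p0 p1 g (min lam (Ebau p0 p1 b / rho p1 g b / 2)) b
      = max (Ebau p0 p1 b / 2) (Ebau p0 p1 b - lam * rho p1 g b)" if "b \<in> B" for b
    using rho_pos[of b] that unfolding demand_def
    by (cases "lam \<le> Ebau p0 p1 b / rho p1 g b / 2") (auto simp: min_def max_def field_simps)
  then show ?thesis
    unfolding agg_demand_def demand_def by (simp cong: sum.cong)
qed

lemma agg_demand_below_vertex:
  assumes "\<forall>b\<in>B. Ebau p0 p1 b / rho p1 g b \<le> m"
  shows "agg_demand (2 * lam - m)
    = (m - 2 * lam) * ((\<Sum>c\<in>C. rho p1 g c) + (\<Sum>b\<in>B. rho p1 g b) / 2)
      + (\<Sum>c\<in>C. Ebau p0 p1 c) + (\<Sum>b\<in>B. Ebau p0 p1 b) / 2"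
proof -
  have "agg_demand (2 * lam - m)
      = (\<Sum>c\<in>C. Ebau p0 p1 c + (m - 2 * lam) * rho p1 g c)
        + (\<Sum>b\<in>B. (Ebau p0 p1 b + (m - 2 * lam) * rho p1 g b) / 2)"
    unfolding agg_demand_def
  proof (intro arg_cong2[where f = "(+)"] sum.cong refl)
    show "demand p0 p1 g (2 * lam - m) c = Ebau p0 p1 c + (m - 2 * lam) * rho p1 g c" for c
      unfolding demand_def by (simp add: algebra_simps)
    show "demand p0 p1 g (min lam ((Ebau p0 p1 b / rho p1 g b + (2 * lam - m)) / 2)) b
        = (Ebau p0 p1 b + (m - 2 * lam) * rho p1 g b) / 2" if "b \<in> B" for b
      using assms rho_pos[of b] that unfolding demand_def by (auto simp: min_def field_simps)
  qed
  also have "\<dots> = ((\<Sum>c\<in>C. Ebau p0 p1 c) + (m - 2 * lam) * (\<Sum>c\<in>C. rho p1 g c))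
      + ((\<Sum>b\<in>B. Ebau p0 p1 b) + (m - 2 * lam) * (\<Sum>b\<in>B. rho p1 g b)) / 2"
    by (simp add: sum.distrib sum_distrib_left flip: sum_divide_distrib)
  finally show ?thesis by (simp add: field_simps)
qed

text \<open>The feasibility bounds on \<open>A\<close> are the aggregate demand at the spot prices \<open>2 lam - max (Ebau / rho)\<close>
  and \<open>0\<close>; monotonicity traps the equilibrium spot price between them.\<close>
lemma equilibrium_spot_price_bounds:
  assumes lo: "(Max ((\<lambda>b. Ebau p0 p1 b / rho p1 g b) ` B) - 2 * lam)
                  * ((\<Sum>c\<in>C. rho p1 g c) + (\<Sum>b\<in>B. rho p1 g b) / 2)
                + (\<Sum>c\<in>C. Ebau p0 p1 c) + (\<Sum>b\<in>B. Ebau p0 p1 b) / 2 \<le> A"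
    and hi: "A < (\<Sum>c\<in>C. Ebau p0 p1 c)
                  + (\<Sum>b\<in>B. max (Ebau p0 p1 b / 2) (Ebau p0 p1 b - lam * rho p1 g b))"
    and eq: "is_equilibrium C B p0 p1 g lam A S"
  shows "0 < S" and "\<forall>b\<in>B. Ebau p0 p1 b / rho p1 g b + S \<le> 2 * lam"
    and "A < (\<Sum>i\<in>C \<union> B. Ebau p0 p1 i)"
proof -
  have A: "A = agg_demand S" using eq by (rule agg_demand_if_equilibrium)
  show "0 < S"
  proof (rule ccontr)
    assume "\<not> 0 < S"
    then have "agg_demand 0 \<le> agg_demand S"
      using agg_demand_strict_antimono[of S 0] by (cases "S = 0") auto
    with A hi show False unfolding agg_demand_zero by linarith
  qed
  define m where "m = Max ((\<lambda>b. Ebau p0 p1 b / rho p1 g b) ` B)"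
  have m_ge: "\<forall>b\<in>B. Ebau p0 p1 b / rho p1 g b \<le> m"
    unfolding m_def using finite_B by simp
  have "S \<le> 2 * lam - m"
  proof (rule ccontr)
    assume "\<not> S \<le> 2 * lam - m"
    then have "agg_demand S < agg_demand (2 * lam - m)" by (intro agg_demand_strict_antimono) simp
    with A lo[folded m_def] show False unfolding agg_demand_below_vertex[OF m_ge] by linarith
  qed
  with m_ge show "\<forall>b\<in>B. Ebau p0 p1 b / rho p1 g b + S \<le> 2 * lam" by force
  have "0 \<le> lam" using \<open>0 < S\<close> eq unfolding is_equilibrium_def by simp
  then have "max (Ebau p0 p1 b / 2) (Ebau p0 p1 b - lam * rho p1 g b) \<le> Ebau p0 p1 b" if "b \<in> B" for b
    using Ebau_pos[of b] rho_pos[of b] that by simp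
  then have "(\<Sum>b\<in>B. max (Ebau p0 p1 b / 2) (Ebau p0 p1 b - lam * rho p1 g b)) \<le> (\<Sum>b\<in>B. Ebau p0 p1 b)"
    by (rule sum_mono)
  with hi show "A < (\<Sum>i\<in>C \<union> B. Ebau p0 p1 i)" unfolding sum_union by linarith
qed

end

lemma (in hybrid_market) tax_aggregates:
  assumes "0 \<le> tau" "\<forall>i\<in>C \<union> B. tau * rho p1 g i < Ebau p0 p1 i"
  shows "WC_tax C B p0 p1 g tau = (\<Sum>i\<in>C \<union> B. optimal_wealth p0 p1 g tau i)"
    and "(\<Sum>i\<in>C \<union> B. tax_emission p0 p1 g tau i)
           = (\<Sum>i\<in>C \<union> B. Ebau p0 p1 i) - tau * (\<Sum>i\<in>C \<union> B. rho p1 g i)"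
proof -
  have "tax_wealth p0 p1 g tau i = optimal_wealth p0 p1 g tau i"
    and "tax_emission p0 p1 g tau i = Ebau p0 p1 i - tau * rho p1 g i" if "i \<in> C \<union> B" for i
    using tax_wealth_emission_eq[of p1 i g tau p0] params_pos assms that by auto
  note wealth = this(1) and emission = this(2)
  show "WC_tax C B p0 p1 g tau = (\<Sum>i\<in>C \<union> B. optimal_wealth p0 p1 g tau i)"
    unfolding WC_tax_def by (rule sum.cong) (simp_all add: wealth)
  have "(\<Sum>i\<in>C \<union> B. tax_emission p0 p1 g tau i) = (\<Sum>i\<in>C \<union> B. Ebau p0 p1 i - tau * rho p1 g i)"
    by (rule sum.cong) (simp_all add: emission)
  then show "(\<Sum>i\<in>C \<union> B. tax_emission p0 p1 g tau i)
           = (\<Sum>i\<in>C \<union> B. Ebau p0 p1 i) - tau * (\<Sum>i\<in>C \<union> B. rho p1 g i)"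
    by (simp add: sum_subtractf sum_distrib_left)
qed

text \<open>Equilibria in which every intermediary charges the vertex price of its margin; by
  \<open>equilibrium_spot_price_bounds\<close> the feasibility condition leaves no others.\<close>
locale hybrid_equilibrium = hybrid_market +
  fixes S :: real
  assumes spot_nonneg: "0 \<le> S" and spot_le_penalty: "S \<le> lam"
    and vertex_le_penalty: "\<forall>b\<in>B. Ebau p0 p1 b / rho p1 g b + S \<le> 2 * lam"
begin

lemma mprice_vertex: "b \<in> B \<Longrightarrow> mprice B p0 p1 g lam S b = (Ebau p0 p1 b / rho p1 g b + S) / 2"
  using mprice_intermediated[OF _ spot_le_penalty] vertex_le_penalty by auto

lemma mprice_bounds:
  assumes "i \<in> C \<union> B"
  shows "0 \<le> mprice B p0 p1 g lam S i \<and> mprice B p0 p1 g lam S i \<le> lam"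
proof (cases "i \<in> C")
  case True
  then show ?thesis using mprice_direct spot_nonneg spot_le_penalty by simp
next
  case False
  then have "i \<in> B" using assms by simp
  moreover have "0 < Ebau p0 p1 i / rho p1 g i" using Ebau_pos[OF assms] rho_pos[OF assms] by simp
  ultimately show ?thesis using mprice_vertex[of i] vertex_le_penalty spot_nonneg by auto
qed

lemma market_outcome:
  assumes "i \<in> C \<union> B"
  shows "mar_wealth p0 p1 g lam (mprice B p0 p1 g lam S i) i
           = optimal_wealth p0 p1 g (mprice B p0 p1 g lam S i) i"
    and "Emar B p0 p1 g lam S i = demand p0 p1 g (mprice B p0 p1 g lam S i) i"
proof -
  have "mprice B p0 p1 g lam S i * rho p1 g i \<le> lam * rho p1 g i"
    using mprice_bounds[OF assms] rho_pos[OF assms] by (simp add: mult_right_mono)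
  then have "mprice B p0 p1 g lam S i * rho p1 g i < Ebau p0 p1 i"
    using penalty_below_bau assms by force
  then show "mar_wealth p0 p1 g lam (mprice B p0 p1 g lam S i) i
           = optimal_wealth p0 p1 g (mprice B p0 p1 g lam S i) i"
    and "Emar B p0 p1 g lam S i = demand p0 p1 g (mprice B p0 p1 g lam S i) i"
    using mar_wealth_emission_eq[of p1 i g "mprice B p0 p1 g lam S i" lam p0]
      params_pos mprice_bounds[OF assms] assms
    unfolding Emar_def demand_def by auto
qed

lemma Emar_intermediated:
  assumes "b \<in> B"
  shows "Emar B p0 p1 g lam S b = (Ebau p0 p1 b - S * rho p1 g b) / 2"
    and "mprice B p0 p1 g lam S b = S + Emar B p0 p1 g lam S b / rho p1 g b"
proof -
  have "mprice B p0 p1 g lam S b * rho p1 g b = (Ebau p0 p1 b + S * rho p1 g b) / 2"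
    unfolding mprice_vertex[OF assms] using rho_pos[of b] assms by (simp add: field_simps)
  then show Emar: "Emar B p0 p1 g lam S b = (Ebau p0 p1 b - S * rho p1 g b) / 2"
    using market_outcome(2)[of b] assms unfolding demand_def by simp
  show "mprice B p0 p1 g lam S b = S + Emar B p0 p1 g lam S b / rho p1 g b"
    unfolding Emar mprice_vertex[OF assms] using rho_pos[of b] assms by (simp add: field_simps)
qed

lemma WF_mar_eq: "WF_mar B p0 p1 g lam S = (\<Sum>b\<in>B. Emar B p0 p1 g lam S b ^ 2 / rho p1 g b)"
  unfolding WF_mar_def
proof (rule sum.cong)
  fix b assume b: "b \<in> B"
  then have price: "interm_price p0 p1 g lam S b = mprice B p0 p1 g lam S b" by (simp add: mprice_def)
  have "demand p0 p1 g (mprice B p0 p1 g lam S b) b = Emar B p0 p1 g lam S b"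
    using market_outcome(2)[of b] b by simp
  moreover have "mprice B p0 p1 g lam S b - S = Emar B p0 p1 g lam S b / rho p1 g b"
    using Emar_intermediated(2)[OF b] by simp
  ultimately show "demand p0 p1 g (interm_price p0 p1 g lam S b) b * (interm_price p0 p1 g lam S b - S)
      = Emar B p0 p1 g lam S b ^ 2 / rho p1 g b"
    unfolding price by (simp add: power2_eq_square)
qed simp

lemma optimal_wealth_intermediated:
  assumes "b \<in> B"
  shows "optimal_wealth p0 p1 g (mprice B p0 p1 g lam S b) b
           = optimal_wealth p0 p1 g S b - 3 / 2 * (Emar B p0 p1 g lam S b ^ 2 / rho p1 g b)"
proof -
  define e where "e = Emar B p0 p1 g lam S b"
  have "optimal_wealth p0 p1 g (mprice B p0 p1 g lam S b) b = optimal_wealth p0 p1 g (S + e / rho p1 g b) b"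
    using Emar_intermediated(2)[OF assms] unfolding e_def by simp
  also have "\<dots> = optimal_wealth p0 p1 g S b - e / rho p1 g b * (2 * e) + (e / rho p1 g b) ^ 2 * rho p1 g b / 2"
    using Emar_intermediated(1)[OF assms] unfolding optimal_wealth_shift e_def by simp
  also have "\<dots> = optimal_wealth p0 p1 g S b - 3 / 2 * (e ^ 2 / rho p1 g b)"
    using rho_pos[of b] assms by (simp add: field_simps power2_eq_square)
  finally show ?thesis unfolding e_def .
qed

lemma WC_mar_eq:
  "WC_mar C B p0 p1 g lam S
     = (\<Sum>i\<in>C \<union> B. optimal_wealth p0 p1 g S i) - 3 / 2 * (\<Sum>b\<in>B. Emar B p0 p1 g lam S b ^ 2 / rho p1 g b)"
proof -
  have "(\<Sum>c\<in>C. mar_wealth p0 p1 g lam (mprice B p0 p1 g lam S c) c) = (\<Sum>c\<in>C. optimal_wealth p0 p1 g S c)"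
  proof (rule sum.cong)
    show "mar_wealth p0 p1 g lam (mprice B p0 p1 g lam S c) c = optimal_wealth p0 p1 g S c" if "c \<in> C" for c
      using market_outcome(1)[of c] mprice_direct[OF that, of S] that by simp
  qed simp
  moreover have "(\<Sum>b\<in>B. mar_wealth p0 p1 g lam (mprice B p0 p1 g lam S b) b)
      = (\<Sum>b\<in>B. optimal_wealth p0 p1 g S b - 3 / 2 * (Emar B p0 p1 g lam S b ^ 2 / rho p1 g b))"
    by (rule sum.cong) (simp_all add: market_outcome(1) optimal_wealth_intermediated)
  ultimately show ?thesis
    unfolding WC_mar_def sum_union by (simp add: sum_subtractf sum_distrib_left)
qed

lemma WR_mar_eq: "WR_mar C B p0 p1 g lam A S = S * A"
proof -
  have "(\<Sum>i\<in>C \<union> B. max 0 (Emar B p0 p1 g lam S i - demand p0 p1 g (mprice B p0 p1 g lam S i) i)) = 0"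
    by (intro sum.neutral ballI) (simp add: market_outcome(2))
  then show ?thesis unfolding WR_mar_def by simp
qed

lemma sum_Emar:
  "(\<Sum>i\<in>C \<union> B. Emar B p0 p1 g lam S i)
     = (\<Sum>i\<in>C \<union> B. Ebau p0 p1 i) - S * (\<Sum>i\<in>C \<union> B. rho p1 g i) - (\<Sum>b\<in>B. Emar B p0 p1 g lam S b)"
proof -
  have "(\<Sum>c\<in>C. Emar B p0 p1 g lam S c) = (\<Sum>c\<in>C. Ebau p0 p1 c - S * rho p1 g c)"
    by (rule sum.cong) (simp_all add: market_outcome(2) mprice_direct demand_def)
  moreover have "(\<Sum>b\<in>B. Ebau p0 p1 b - S * rho p1 g b) = 2 * (\<Sum>b\<in>B. Emar B p0 p1 g lam S b)"
    unfolding sum_distrib_left by (rule sum.cong) (simp_all add: Emar_intermediated(1))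
  moreover have "(\<Sum>i\<in>C \<union> B. Ebau p0 p1 i - S * rho p1 g i)
      = (\<Sum>i\<in>C \<union> B. Ebau p0 p1 i) - S * (\<Sum>i\<in>C \<union> B. rho p1 g i)"
    by (simp add: sum_subtractf sum_distrib_left)
  ultimately show ?thesis unfolding sum_union by linarith
qed

end


theorem corollaryB2:
  fixes C B :: "'i set" and p0 p1 g :: "'i \<Rightarrow> real" and tau lam A S :: real
  assumes finC: "finite C" and finB: "finite B" and disj: "C \<inter> B = {}"
    and neC: "C \<noteq> {}" and neB: "B \<noteq> {}"
    and pos: "\<forall>i\<in>C \<union> B. 0 < p0 i \<and> 0 < p1 i \<and> 0 < g i"
    and stand_tau: "\<forall>i\<in>C \<union> B. tau * rho p1 g i < Ebau p0 p1 i"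
    and stand_lam: "\<forall>i\<in>C \<union> B. lam * rho p1 g i < Ebau p0 p1 i"
    and feas_lo: "(Max ((\<lambda>b. Ebau p0 p1 b / rho p1 g b) ` B) - 2 * lam)
                    * ((\<Sum>c\<in>C. rho p1 g c) + (\<Sum>b\<in>B. rho p1 g b) / 2)
                  + (\<Sum>c\<in>C. Ebau p0 p1 c) + (\<Sum>b\<in>B. Ebau p0 p1 b) / 2 \<le> A"
    and feas_hi: "A < (\<Sum>c\<in>C. Ebau p0 p1 c)
                    + (\<Sum>b\<in>B. max (Ebau p0 p1 b / 2) (Ebau p0 p1 b - lam * rho p1 g b))"
    and eq: "is_equilibrium C B p0 p1 g lam A S"
    and tax_agg: "(\<Sum>i\<in>C \<union> B. tax_emission p0 p1 g tau i) = A"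
    and mar_agg: "(\<Sum>i\<in>C \<union> B. Emar B p0 p1 g lam S i) = A"
  shows "let r = (\<Sum>i\<in>C \<union> B. rho p1 g i);
             X = (\<Sum>b\<in>B. Emar B p0 p1 g lam S b) ^ 2 / r
                 - (\<Sum>b\<in>B. (Emar B p0 p1 g lam S b) ^ 2 / rho p1 g b)
         in GDP_mar C B p0 p1 g lam A S = GDP_tax C B p0 p1 g tau + X / 2
            \<and> X \<le> 0
            \<and> WC_mar C B p0 p1 g lam S + WR_mar C B p0 p1 g lam A S
              = WC_tax C B p0 p1 g tau + WR_tax C B p0 p1 g tau + 3 / 2 * X
                - (\<Sum>b\<in>B. Emar B p0 p1 g lam S b) ^ 2 / r"
proof -
  interpret hybrid_market C B p0 p1 g lam
    using finC finB disj neC pos stand_lam by unfold_locales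
  note spot = equilibrium_spot_price_bounds[OF feas_lo feas_hi eq]
  interpret hybrid_equilibrium C B p0 p1 g lam S
    using spot(1,2) eq by unfold_locales (auto simp: is_equilibrium_def)
  have "0 \<le> tau"
    using tax_rate_nonneg[of "C \<union> B" p0 p1 g tau] finC finB neC pos tax_agg spot(3) by auto
  note tax = tax_aggregates[OF this stand_tau]
  define R T Q where "R = (\<Sum>i\<in>C \<union> B. rho p1 g i)" and "T = (\<Sum>b\<in>B. Emar B p0 p1 g lam S b)"
    and "Q = (\<Sum>b\<in>B. Emar B p0 p1 g lam S b ^ 2 / rho p1 g b)"
  have "0 < R" unfolding R_def using finC finB neC rho_pos by (intro sum_pos) auto
  have A: "A = (\<Sum>i\<in>C \<union> B. Ebau p0 p1 i) - tau * R"
    using tax(2) tax_agg unfolding R_def by simp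
  moreover have "A = (\<Sum>i\<in>C \<union> B. Ebau p0 p1 i) - S * R - T"
    using sum_Emar mar_agg unfolding R_def T_def by simp
  ultimately have tau: "tau = S + T / R" using \<open>0 < R\<close> by (simp add: field_simps)
  have "T ^ 2 / R \<le> Q"
    unfolding R_def T_def Q_def using finC finB rho_pos by (intro weighted_Cauchy_Schwarz_subset) auto
  then show ?thesis
    unfolding Let_def GDP_mar_def GDP_tax_def WR_tax_def WC_mar_eq WF_mar_eq WR_mar_eq tax(1) tax_agg
      sum_optimal_wealth R_def[symmetric] T_def[symmetric] Q_def[symmetric]
    unfolding A tau
    using \<open>0 < R\<close> by (simp add: field_simps power2_eq_square)
qed

end
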